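(* Let $n\ge1$ and let $\mathbf{v},\mathbf{w}\in\{0,1\}^n$ be coordinates in multi-degree $\mathbf{1}_n$ of $\mathcal{L}^{\mathbb{Q}}_{T^n}(\mathbb{Q}[t];\mathbb{Q})$, and $x,y\in\mathbb{Q}[t]$. In the total complex $\mathrm{Tot}(\mathcal{L}^{\mathbb{Q}}_{T^n}(\mathbb{Q}[t];\mathbb{Q}))$: (1) If $\mathbf{v}$ and $\mathbf{w}$ are both $0$ in the $i$th place for some $1\le i\le n$, then $x_{\mathbf{v}}\cdot y_{\mathbf{w}}\sim0$. In particular, if $\mathbf{v}\neq\mathbf{1}_n$ then $x_{\mathbf{v}}\sim0$. (2) In general, \[x_{\mathbf{v}}\cdot y_{\mathbf{w}}\sim\sum_{\substack{\mathbf{v}'\le\mathbf{v},\ \mathbf{w}'\le\mathbf{w},\\ \mathbf{v}'+\mathbf{w}'=\mathbf{1}_n}}x_{\mathbf{v}'}\cdot y_{\mathbf{w}'},\] the sum over all pairs of coordinates $\mathbf{v}',\mathbf{w}'\in\{0,1\}^n$ that are place-wise no greater than $\mathbf{v}$, $\mathbf{w}$ respectively and take the value $1$ in complementary places. (3) For $k\ge1$, \[(t^k)_{\mathbf{1}_n}\sim\sum_{\substack{\mathbf{w}_1,\dots,\mathbf{w}_k\neq\mathbf{0}_n,\\ \mathbf{w}_1+\cdots+\mathbf{w}_k=\mathbf{1}_n}}\prod_{i=1}^kt_{\mathbf{w}_i},\] the sum over ordered $k$-tuples of nonzero coordinates in $\{0,1\}^n$. In particular, if $k=n$ and $\mathbf{e}_i$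 denotes the coordinate with $1$ in the $i$th place and $0$ elsewhere, then $(t^n)_{\mathbf{1}_n}\sim n!\prod_{i=1}^nt_{\mathbf{e}_i}$; and if $k>n$ then $(t^k)_{\mathbf{1}_n}\sim0$.
   Context: The $n$-chain complex $\mathcal{L}^{\mathbb{Q}}_{T^n}(\mathbb{Q}[t];\mathbb{Q})$ (Loday construction of $\mathbb{Q}[t]$ over the $n$-fold product of simplicial circles, with coefficients in $\mathbb{Q}$ via $t\mapsto0$): in multi-degree $\mathbf{V}\in\mathbb{N}^n$, elements are sums of multi-matrices of size $(v_1+1)\times\cdots\times(v_n+1)$ with entries in $\mathbb{Q}[t]$ at coordinates $\mathbf{v}\ne\mathbf{0}_n$ ($\mathbf{0}\le\mathbf{v}\le\mathbf{V}$) and in $\mathbb{Q}$ at $\mathbf{0}_n$ (tensors over $\mathbb{Q}$). In direction $i$ the slices are indexed by $j\in\{0,\dots,v_i\}$; $d_{i,j}$ ($j<v_i$) multiplies slices $j$ and $j+1$ entrywise, $d_{i,v_i}$ multiplies slice $v_i$ into slice $0$; $\mathrm{d}_i=\sum_j(-1)^jd_{i,j}$ and the total differential is $\mathrm{d}=\sum_i(-1)^{v_1+\cdots+v_{i-1}}\mathrm{d}_i$; $\sim$ means differing by a boundary. $\mathbf{0}_n,\mathbf{1}_n$ are constant vectors; for $x\in\mathbb{Q}[t]$, $x_{\mathbf{v}}$ is the multi-matrix with $x$ at $\mathbf{v}$ (its image in $\mathbb{Q}$ if $\mathbf{v}=\mathbf{0}_n$) and $1$ elsewhere, and products such as $x_{\mathbf{v}}\cdot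 y_{\mathbf{w}}$ or $\prod_it_{\mathbf{w}_i}$ are entrywise products of multi-matrices. Sums and inequalities of coordinates are place-wise. *)

theory Defs
  imports "HOL-Library.Poly_Mapping" "HOL-Computational_Algebra.Polynomial"
begin

text \<open>Coordinates are lists of naturals of length n.  By the Kuenneth iso, the degree-V part
  of the Loday construction (tensor product over Q of copies of Q[t] at the nonzero
  coordinates v <= V, and Q at 0) is the polynomial ring over Q in variables t_v,
  v a nonzero coordinate with v <= V.  A multi-matrix with entries f_v is the product
  of the f_v(t_v).\<close>

type_synonym mpoly = "(nat list \<Rightarrow>\<^sub>0 nat) \<Rightarrow>\<^sub>0 rat"

definition mconst :: "rat \<Rightarrow> mpoly" where
  "mconst c = Poly_Mapping.single 0 c"

definition mvar :: "nat list \<Rightarrow> mpoly" where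
  "mvar v = Poly_Mapping.single (Poly_Mapping.single v 1) 1"

definition vars :: "mpoly \<Rightarrow> nat list set" where
  "vars p = \<Union>((\<lambda>m::nat list \<Rightarrow>\<^sub>0 nat. Poly_Mapping.keys m) ` Poly_Mapping.keys p)"

definition msubst :: "(nat list \<Rightarrow> mpoly) \<Rightarrow> mpoly \<Rightarrow> mpoly" where
  "msubst \<sigma> p = (\<Sum>m\<in>Poly_Mapping.keys p. mconst (Poly_Mapping.lookup p m) * (\<Prod>v\<in>Poly_Mapping.keys m. \<sigma> v ^ Poly_Mapping.lookup m v))"

text \<open>Nonzero coordinates of multi-degree V (the variables of the degree-V group).\<close>
definition nzcoords :: "nat \<Rightarrow> nat list \<Rightarrow> nat list set" where
  "nzcoords n V = {v. length v = n \<and> (\<forall>k<n. v ! k \<le> V ! k) \<and> v \<noteq> replicate n 0}"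

text \<open>Effect of the face map d_{i,j} (in multi-degree V) on coordinates: for j < V_i slices
  j and j+1 are merged, for j = V_i slice V_i is merged into slice 0.\<close>
definition face_coord :: "nat list \<Rightarrow> nat \<Rightarrow> nat \<Rightarrow> nat list \<Rightarrow> nat list" where
  "face_coord V i j v = v[i := (if j < V ! i then (if v ! i \<le> j then v ! i else v ! i - 1)
                                 else (if v ! i = V ! i then 0 else v ! i))]"

text \<open>Face map d_{i,j}: entries are multiplied together; entries landing at coordinate 0
  are mapped to Q via t \<mapsto> 0.\<close>
definition face :: "nat list \<Rightarrow> nat \<Rightarrow> nat \<Rightarrow> mpoly \<Rightarrow> mpoly" where
  "face V i j = msubst (\<lambda>v. let w = face_coord V i j v in
                              if w = replicate (length w) 0 then 0 else mvar w)"

definition dir_d :: "nat list \<Rightarrow> nat \<Rightarrow> mpoly \<Rightarrow> mpoly" where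
  "dir_d V i p = (\<Sum>j\<le>V ! i. (-1) ^ j * face V i j p)"

text \<open>Chains of the total complex: functions from multi-degrees to polynomials; the total
  differential, evaluated at a target multi-degree V'.\<close>
definition tot_d :: "nat \<Rightarrow> (nat list \<Rightarrow> mpoly) \<Rightarrow> nat list \<Rightarrow> mpoly" where
  "tot_d n c V' = (\<Sum>i<n. (-1) ^ sum_list (take i V') *
       (let V = V'[i := Suc (V' ! i)] in dir_d V i (c V)))"

definition is_boundary :: "nat \<Rightarrow> nat \<Rightarrow> (nat list \<Rightarrow> mpoly) \<Rightarrow> bool" where
  "is_boundary n m z \<longleftrightarrow> (\<exists>c.
     (\<forall>V. length V = n \<and> sum_list V = Suc m \<longrightarrow> vars (c V) \<subseteq> nzcoords n V) \<and>
     (\<forall>V. length V = n \<and> sum_list V = m \<longrightarrow> z V = tot_d n c V))"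

definition ones :: "nat \<Rightarrow> nat list" where
  "ones n = replicate n 1"

definition sim1 :: "nat \<Rightarrow> mpoly \<Rightarrow> mpoly \<Rightarrow> bool" where
  "sim1 n a b \<longleftrightarrow> is_boundary n n (\<lambda>V. if V = ones n then a - b else 0)"

text \<open>x_v for x in Q[t]: x at v, 1 elsewhere; at v = 0 its image x(0) in Q.\<close>
definition entry :: "nat \<Rightarrow> nat list \<Rightarrow> rat poly \<Rightarrow> mpoly" where
  "entry n v x = (if v = replicate n 0 then mconst (poly x 0)
                  else (\<Sum>k\<le>degree x. mconst (coeff x k) * mvar v ^ k))"

definition bincoords :: "nat \<Rightarrow> nat list set" where
  "bincoords n = {v. length v = n \<and> set v \<subseteq> {0, 1}}"

definition unit_coord :: "nat \<Rightarrow> nat \<Rightarrow> nat list" where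
  "unit_coord n i = (replicate n 0)[i := 1]"

definition vsum :: "nat \<Rightarrow> nat list list \<Rightarrow> nat list" where
  "vsum n ws = map (\<lambda>i. \<Sum>w\<leftarrow>ws. w ! i) [0..<n]"

end

theory Submission
  imports Defs "HOL-Combinatorics.Multiset_Permutations"
begin

text \<open>
  Let \<open>\<rho>\<^sub>i\<close> (\<open>collapse n i\<close>) send \<open>t\<^sub>v\<close> to \<open>t\<^sub>v\<close> with the \<open>i\<close>-th coordinate of \<open>v\<close> set
  to 0 (and to 0 at the origin). In multi-degree \<open>1\<^sub>n + e\<^sub>i\<close> the element \<open>lift i p * q\<close>, which
  carries \<open>p\<close> in slices 0 and 2 and \<open>q\<close> in slices 0 and 1 of direction \<open>i\<close>, has boundary
  \<open>p \<rho>\<^sub>i(q) - p q + \<rho>\<^sub>i(p) q\<close>. Hence in degree \<open>1\<^sub>n\<close> the Hochschild relation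
  \<open>p q \<sim> p \<rho>\<^sub>i(q) + \<rho>\<^sub>i(p) q\<close> holds, and \<open>\<rho>\<^sub>i(q) \<sim> 0\<close> (take \<open>p = 1\<close>).

  For a product of entries \<open>(x\<^sub>j)\<^sub>v\<^sub>j\<close> with binary coordinates, this relation moves a
  coordinate \<open>i\<close> used by two factors into exactly one of them, while a product in which no
  factor uses \<open>i\<close> is fixed by \<open>\<rho>\<^sub>i\<close> and hence \<open>\<sim> 0\<close>. Induction on the total weight of the
  \<open>v\<^sub>j\<close> gives \<open>\<Prod>(x\<^sub>j)\<^sub>v\<^sub>j \<sim> \<Sum>\<Prod>(x\<^sub>j)\<^sub>w\<^sub>j\<close>, summed over all splittings \<open>w\<^sub>j \<le> v\<^sub>j\<close> with
  \<open>\<Sum>w\<^sub>j = 1\<^sub>n\<close>. Two factors give (1) and (2); \<open>k\<close> copies of \<open>t\<close> at \<open>1\<^sub>n\<close> give (3), factors at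
  the origin vanishing because \<open>t \<mapsto> 0\<close> there. For \<open>k = n\<close> the splittings into nonzero
  coordinates are the permutations of the unit coordinates, and for \<open>k > n\<close> there are none.
\<close>

section \<open>Substitution of variables\<close>

lemma mconst_0 [simp]: "mconst 0 = 0"
  by (simp add: mconst_def)

lemma mconst_1 [simp]: "mconst 1 = 1"
  by (simp add: mconst_def)

lemma mconst_add: "mconst (a + b) = mconst a + mconst b"
  by (simp add: mconst_def single_add)

lemma mconst_mult: "mconst (a * b) = mconst a * mconst b"
  by (simp add: mconst_def mult_single)

lemma poly_mapping_sum_single_lookup:
  "(\<Sum>m\<in>Poly_Mapping.keys p. Poly_Mapping.single m (Poly_Mapping.lookup p m)) = p"
  by (rule poly_mapping_eqI) (simp add: lookup_sum lookup_single when_def in_keys_iff)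

lemma keys_add_monom:
  "Poly_Mapping.keys (a + b :: 'a \<Rightarrow>\<^sub>0 nat) = Poly_Mapping.keys a \<union> Poly_Mapping.keys b"
  by (auto simp: in_keys_iff lookup_add)

definition msubst_monom :: "(nat list \<Rightarrow> mpoly) \<Rightarrow> (nat list \<Rightarrow>\<^sub>0 nat) \<Rightarrow> mpoly" where
  "msubst_monom \<sigma> m = (\<Prod>v\<in>Poly_Mapping.keys m. \<sigma> v ^ Poly_Mapping.lookup m v)"

lemma msubst_monom_superset:
  assumes "finite A" "Poly_Mapping.keys m \<subseteq> A"
  shows "msubst_monom \<sigma> m = (\<Prod>v\<in>A. \<sigma> v ^ Poly_Mapping.lookup m v)"
  unfolding msubst_monom_def
  by (rule prod.mono_neutral_left) (use assms in \<open>auto simp: in_keys_iff\<close>)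

lemma msubst_monom_add: "msubst_monom \<sigma> (a + b) = msubst_monom \<sigma> a * msubst_monom \<sigma> b"
proof -
  let ?A = "Poly_Mapping.keys a \<union> Poly_Mapping.keys b"
  have "msubst_monom \<sigma> (a + b) = (\<Prod>v\<in>?A. \<sigma> v ^ Poly_Mapping.lookup (a + b) v)"
    by (rule msubst_monom_superset) (auto simp: keys_add_monom)
  also have "\<dots> = (\<Prod>v\<in>?A. \<sigma> v ^ Poly_Mapping.lookup a v) * (\<Prod>v\<in>?A. \<sigma> v ^ Poly_Mapping.lookup b v)"
    by (simp add: lookup_add power_add prod.distrib)
  also have "\<dots> = msubst_monom \<sigma> a * msubst_monom \<sigma> b"
    using msubst_monom_superset[of ?A a \<sigma>] msubst_monom_superset[of ?A b \<sigma>] by simp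
  finally show ?thesis .
qed

lemma msubst_eq_sum_monom:
  "msubst \<sigma> p = (\<Sum>m\<in>Poly_Mapping.keys p. mconst (Poly_Mapping.lookup p m) * msubst_monom \<sigma> m)"
  by (simp add: msubst_def msubst_monom_def)

lemma msubst_superset:
  assumes "finite A" "Poly_Mapping.keys p \<subseteq> A"
  shows "msubst \<sigma> p = (\<Sum>m\<in>A. mconst (Poly_Mapping.lookup p m) * msubst_monom \<sigma> m)"
  unfolding msubst_eq_sum_monom
  by (rule sum.mono_neutral_left) (use assms in \<open>auto simp: in_keys_iff\<close>)

lemma msubst_0 [simp]: "msubst \<sigma> 0 = 0"
  by (simp add: msubst_def)

lemma msubst_add: "msubst \<sigma> (p + q) = msubst \<sigma> p + msubst \<sigma> q"
proof -
  let ?A = "Poly_Mapping.keys p \<union> Poly_Mapping.keys q"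
  have "msubst \<sigma> (p + q) = (\<Sum>m\<in>?A. mconst (Poly_Mapping.lookup (p + q) m) * msubst_monom \<sigma> m)"
    by (rule msubst_superset) (simp_all add: keys_add)
  also have "\<dots> = msubst \<sigma> p + msubst \<sigma> q"
    by (simp add: msubst_superset[of ?A] lookup_add mconst_add distrib_right sum.distrib)
  finally show ?thesis .
qed

lemma msubst_single: "msubst \<sigma> (Poly_Mapping.single m c) = mconst c * msubst_monom \<sigma> m"
  by (subst msubst_superset[where A="{m}"]) auto

lemma msubst_sum: "msubst \<sigma> (sum f A) = (\<Sum>a\<in>A. msubst \<sigma> (f a))"
  by (induction A rule: infinite_finite_induct) (auto simp: msubst_add)

lemma msubst_mult: "msubst \<sigma> (p * q) = msubst \<sigma> p * msubst \<sigma> q"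
proof -
  have "p * q = (\<Sum>a\<in>Poly_Mapping.keys p. \<Sum>b\<in>Poly_Mapping.keys q.
      Poly_Mapping.single (a + b) (Poly_Mapping.lookup p a * Poly_Mapping.lookup q b))"
    by (subst (1 2) poly_mapping_sum_single_lookup[symmetric]) (simp add: sum_product mult_single)
  then have "msubst \<sigma> (p * q) = (\<Sum>a\<in>Poly_Mapping.keys p. \<Sum>b\<in>Poly_Mapping.keys q.
      (mconst (Poly_Mapping.lookup p a) * msubst_monom \<sigma> a) * (mconst (Poly_Mapping.lookup q b) * msubst_monom \<sigma> b))"
    by (simp add: msubst_sum msubst_single mconst_mult msubst_monom_add mult_ac)
  also have "\<dots> = msubst \<sigma> p * msubst \<sigma> q"
    by (simp add: msubst_eq_sum_monom sum_product)
  finally show ?thesis .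
qed

lemma msubst_mconst [simp]: "msubst \<sigma> (mconst c) = mconst c"
  by (simp add: mconst_def msubst_single msubst_monom_def)

lemma msubst_1 [simp]: "msubst \<sigma> 1 = 1"
  using msubst_mconst[of \<sigma> 1] by simp

lemma msubst_mvar [simp]: "msubst \<sigma> (mvar v) = \<sigma> v"
  by (simp add: mvar_def msubst_single msubst_monom_def)

lemma msubst_uminus: "msubst \<sigma> (- p) = - msubst \<sigma> p"
  using msubst_add[of \<sigma> p "- p"] by (intro minus_unique[symmetric]) simp

lemma msubst_power: "msubst \<sigma> (p ^ k) = msubst \<sigma> p ^ k"
  by (induction k) (auto simp: msubst_mult)

lemma msubst_prod: "msubst \<sigma> (prod f A) = (\<Prod>a\<in>A. msubst \<sigma> (f a))"
  by (induction A rule: infinite_finite_induct) (auto simp: msubst_mult)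

lemma msubst_mvar_id: "msubst mvar p = p"
proof -
  have "msubst_monom mvar m = Poly_Mapping.single m 1" for m
  proof -
    have "mvar v ^ k = Poly_Mapping.single (Poly_Mapping.single v k) 1" for v k
      by (induction k) (simp_all add: mvar_def mult_single flip: single_add)
    moreover have "(\<Prod>v\<in>K. Poly_Mapping.single (f v) (1::rat)) = Poly_Mapping.single (\<Sum>v\<in>K. f v) 1"
      if "finite K" for K and f :: "nat list \<Rightarrow> nat list \<Rightarrow>\<^sub>0 nat"
      using that by (induction K rule: finite_induct) (auto simp: mult_single)
    ultimately show ?thesis
      by (simp add: msubst_monom_def poly_mapping_sum_single_lookup)
  qed
  then show ?thesis
    by (simp add: msubst_eq_sum_monom mconst_def mult_single poly_mapping_sum_single_lookup)
qed

lemma msubst_msubst: "msubst \<sigma> (msubst \<tau> p) = msubst (\<lambda>v. msubst \<sigma> (\<tau> v)) p"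
proof -
  have "msubst \<sigma> (msubst_monom \<tau> m) = msubst_monom (\<lambda>v. msubst \<sigma> (\<tau> v)) m" for m
    by (simp add: msubst_monom_def msubst_prod msubst_power)
  then show ?thesis
    by (simp add: msubst_eq_sum_monom[of _ p] msubst_sum msubst_mult)
qed

lemma vars_0 [simp]: "vars 0 = {}"
  by (simp add: vars_def)

lemma vars_mconst [simp]: "vars (mconst c) = {}"
  by (simp add: vars_def mconst_def)

lemma vars_1 [simp]: "vars 1 = {}"
  using vars_mconst[of 1] by simp

lemma vars_mvar [simp]: "vars (mvar v) = {v}"
  by (simp add: vars_def mvar_def)

lemma vars_uminus [simp]: "vars (- p) = vars p"
  by (simp add: vars_def)

lemma vars_add: "vars (p + q) \<subseteq> vars p \<union> vars q"
  unfolding vars_def using keys_add[of p q] by auto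

lemma vars_mult: "vars (p * q) \<subseteq> vars p \<union> vars q"
proof
  fix v assume "v \<in> vars (p * q)"
  then obtain m where m: "m \<in> Poly_Mapping.keys (p * q)" "v \<in> Poly_Mapping.keys m"
    by (auto simp: vars_def)
  from m(1) keys_mult[of p q] obtain a b
    where "m = a + b" "a \<in> Poly_Mapping.keys p" "b \<in> Poly_Mapping.keys q"
    by blast
  with m(2) show "v \<in> vars p \<union> vars q"
    by (auto simp: vars_def keys_add_monom)
qed

lemma vars_sum: "vars (sum f A) \<subseteq> (\<Union>a\<in>A. vars (f a))"
  by (induction A rule: infinite_finite_induct) (use vars_add in fastforce)+

lemma vars_prod: "vars (prod f A) \<subseteq> (\<Union>a\<in>A. vars (f a))"
  by (induction A rule: infinite_finite_induct) (use vars_mult in fastforce)+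

lemma vars_power: "vars (p ^ k) \<subseteq> vars p"
  by (induction k) (use vars_mult in fastforce)+

lemma vars_msubst: "vars (msubst \<sigma> p) \<subseteq> (\<Union>v\<in>vars p. vars (\<sigma> v))"
proof -
  have "vars (msubst_monom \<sigma> m) \<subseteq> (\<Union>v\<in>vars p. vars (\<sigma> v))" if "m \<in> Poly_Mapping.keys p" for m
  proof -
    have "vars (msubst_monom \<sigma> m) \<subseteq> (\<Union>v\<in>Poly_Mapping.keys m. vars (\<sigma> v ^ Poly_Mapping.lookup m v))"
      unfolding msubst_monom_def by (rule vars_prod)
    also have "\<dots> \<subseteq> (\<Union>v\<in>vars p. vars (\<sigma> v))"
      using that vars_power by (fastforce simp: vars_def)
    finally show ?thesis .
  qed
  then show ?thesis
    unfolding msubst_eq_sum_monom using vars_sum vars_mult by fastforce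
qed

lemma msubst_cong:
  assumes "\<And>v. v \<in> vars p \<Longrightarrow> \<sigma> v = \<tau> v"
  shows "msubst \<sigma> p = msubst \<tau> p"
proof -
  have "\<sigma> v = \<tau> v" if "m \<in> Poly_Mapping.keys p" "v \<in> Poly_Mapping.keys m" for m v
    using assms that by (auto simp: vars_def)
  then show ?thesis
    unfolding msubst_def by (intro sum.cong prod.cong refl arg_cong2[where f="(*)"]) auto
qed

section \<open>Boundaries and the homology relation\<close>

lemma dir_d_add: "dir_d V i (p + q) = dir_d V i p + dir_d V i q"
  by (simp add: dir_d_def face_def msubst_add distrib_left sum.distrib)

lemma dir_d_uminus: "dir_d V i (- p) = - dir_d V i p"
  by (simp add: dir_d_def face_def msubst_uminus sum_negf)

lemma dir_d_0 [simp]: "dir_d V i 0 = 0"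
  by (simp add: dir_d_def face_def)

lemma tot_d_add: "tot_d n (\<lambda>V. c1 V + c2 V) V' = tot_d n c1 V' + tot_d n c2 V'"
  by (simp add: tot_d_def Let_def dir_d_add distrib_left sum.distrib)

lemma tot_d_uminus: "tot_d n (\<lambda>V. - c V) V' = - tot_d n c V'"
  by (simp add: tot_d_def Let_def dir_d_uminus sum_negf)

lemma is_boundary_zero: "is_boundary n m (\<lambda>V. 0)"
  unfolding is_boundary_def by (rule exI[of _ "\<lambda>V. 0"]) (simp add: tot_d_def)

lemma is_boundary_add:
  assumes "is_boundary n m z1" "is_boundary n m z2"
  shows "is_boundary n m (\<lambda>V. z1 V + z2 V)"
proof -
  obtain c1 where c1: "\<forall>V. length V = n \<and> sum_list V = Suc m \<longrightarrow> vars (c1 V) \<subseteq> nzcoords n V"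
    "\<forall>V. length V = n \<and> sum_list V = m \<longrightarrow> z1 V = tot_d n c1 V"
    using assms(1) unfolding is_boundary_def by blast
  obtain c2 where c2: "\<forall>V. length V = n \<and> sum_list V = Suc m \<longrightarrow> vars (c2 V) \<subseteq> nzcoords n V"
    "\<forall>V. length V = n \<and> sum_list V = m \<longrightarrow> z2 V = tot_d n c2 V"
    using assms(2) unfolding is_boundary_def by blast
  show ?thesis
    unfolding is_boundary_def
  proof (intro exI[of _ "\<lambda>V. c1 V + c2 V"] conjI allI impI)
    fix V assume "length V = n \<and> sum_list V = Suc m"
    then show "vars (c1 V + c2 V) \<subseteq> nzcoords n V"
      using c1(1) c2(1) vars_add by blast
  next
    fix V assume "length V = n \<and> sum_list V = m"
    then show "z1 V + z2 V = tot_d n (\<lambda>V. c1 V + c2 V) V"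
      using c1(2) c2(2) by (simp add: tot_d_add)
  qed
qed

lemma is_boundary_uminus:
  assumes "is_boundary n m z"
  shows "is_boundary n m (\<lambda>V. - z V)"
proof -
  obtain c where c: "\<forall>V. length V = n \<and> sum_list V = Suc m \<longrightarrow> vars (c V) \<subseteq> nzcoords n V"
    "\<forall>V. length V = n \<and> sum_list V = m \<longrightarrow> z V = tot_d n c V"
    using assms unfolding is_boundary_def by blast
  show ?thesis
    unfolding is_boundary_def
    using c by (intro exI[of _ "\<lambda>V. - c V"]) (simp add: tot_d_uminus)
qed

lemma sim1_0_iff: "sim1 n a 0 \<longleftrightarrow> is_boundary n n (\<lambda>V. if V = ones n then a else 0)"
  unfolding sim1_def diff_zero ..

lemma sim1_iff_diff: "sim1 n a b \<longleftrightarrow> sim1 n (a - b) 0"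
  unfolding sim1_def diff_zero ..

lemma sim1_0_add:
  assumes "sim1 n a 0" "sim1 n b 0"
  shows "sim1 n (a + b) 0"
proof -
  have "(\<lambda>V. if V = ones n then a + b else 0) =
      (\<lambda>V. (if V = ones n then a else 0) + (if V = ones n then b else 0))"
    by auto
  then show ?thesis
    using is_boundary_add assms by (simp add: sim1_0_iff)
qed

lemma sim1_0_uminus:
  assumes "sim1 n a 0"
  shows "sim1 n (- a) 0"
proof -
  have "(\<lambda>V. if V = ones n then - a else 0) = (\<lambda>V. - (if V = ones n then a else 0))"
    by auto
  then show ?thesis
    using is_boundary_uminus assms by (simp add: sim1_0_iff)
qed

lemma sim1_0_neg_one_power_mult_iff: "sim1 n ((-1) ^ m * a) 0 \<longleftrightarrow> sim1 n a 0"
proof (cases "even m")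
  case False
  then have "(-1) ^ m * a = - a"
    by simp
  then show ?thesis
    using sim1_0_uminus[of n a] sim1_0_uminus[of n "- a"] by auto
qed simp

lemma sim1_refl: "sim1 n a a"
  unfolding sim1_def diff_self if_cancel by (rule is_boundary_zero)

lemma sim1_add:
  assumes "sim1 n a b" "sim1 n c d"
  shows "sim1 n (a + c) (b + d)"
proof -
  have "sim1 n ((a - b) + (c - d)) 0"
    using assms sim1_0_add unfolding sim1_iff_diff[of n a b] sim1_iff_diff[of n c d] by blast
  then show ?thesis
    unfolding sim1_iff_diff[of n "a + c"] by (simp only: add_diff_add)
qed

lemma sim1_trans [trans]:
  assumes "sim1 n a b" "sim1 n b c"
  shows "sim1 n a c"
proof -
  have "sim1 n ((a - b) + (b - c)) 0"
    using assms sim1_0_add unfolding sim1_iff_diff[of n a b] sim1_iff_diff[of n b c] by blast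
  then show ?thesis
    unfolding sim1_iff_diff[of n a c] by simp
qed

section \<open>The Hochschild relation\<close>

lemma length_ones [simp]: "length (ones n) = n"
  by (simp add: ones_def)

lemma nth_ones [simp]: "k < n \<Longrightarrow> ones n ! k = 1"
  by (simp add: ones_def)

lemma nzcoords_onesD:
  assumes "v \<in> nzcoords n (ones n)"
  shows "length v = n" "k < n \<Longrightarrow> v ! k \<le> 1" "v \<noteq> replicate n 0"
  using assms by (auto simp: nzcoords_def)

text \<open>The generator \<open>t\<close> at coordinate \<open>w\<close>; at the origin it is read as its image \<open>0 \<in> \<rat>\<close>.\<close>

definition tvar :: "nat \<Rightarrow> nat list \<Rightarrow> mpoly" where
  "tvar n w = (if w = replicate n 0 then 0 else mvar w)"

lemma msubst_tvar_id:
  assumes "vars p \<subseteq> nzcoords n V"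
  shows "msubst (tvar n) p = p"
proof -
  have "msubst (tvar n) p = msubst mvar p"
    by (rule msubst_cong) (use assms in \<open>auto simp: tvar_def nzcoords_def\<close>)
  then show ?thesis
    by (simp add: msubst_mvar_id)
qed

lemma face_eq_msubst_tvar: "face V i j p = msubst (\<lambda>v. tvar (length v) (face_coord V i j v)) p"
  by (simp add: face_def tvar_def face_coord_def Let_def)

text \<open>The face \<open>d\<^sub>i\<^sub>,\<^sub>0\<close> into multi-degree \<open>1\<^sub>n - e\<^sub>i\<close>, read back in multi-degree \<open>1\<^sub>n\<close>.\<close>

definition collapse :: "nat \<Rightarrow> nat \<Rightarrow> mpoly \<Rightarrow> mpoly" where
  "collapse n i = msubst (\<lambda>v. tvar n (v[i := 0]))"

lemma collapse_prod: "collapse n i (prod f A) = (\<Prod>a\<in>A. collapse n i (f a))"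
  by (simp add: collapse_def msubst_prod)

lemma collapse_1 [simp]: "collapse n i 1 = 1"
  by (simp add: collapse_def)

text \<open>In multi-degree \<open>1\<^sub>n + e\<^sub>i\<close>, \<open>lift i p\<close> is \<open>p\<close> with its slice 1 in direction \<open>i\<close>
  moved to slice 2 and slice 1 filled with 1s.\<close>

definition lift_coord :: "nat \<Rightarrow> nat list \<Rightarrow> nat list" where
  "lift_coord i v = (if v ! i = 1 then v[i := 2] else v)"

definition lift :: "nat \<Rightarrow> mpoly \<Rightarrow> mpoly" where
  "lift i = msubst (\<lambda>v. mvar (lift_coord i v))"

lemma nzcoords_ones_nth_cases:
  assumes "v \<in> nzcoords n (ones n)" "i < n"
  shows "v ! i = 0 \<and> v[i := 0] = v \<or> v ! i = 1 \<and> v[i := 1] = v"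
  using nzcoords_onesD(2)[OF assms] by (metis le_neq_implies_less less_one list_update_id)

lemma face_coord_hochschild:
  assumes "v \<in> nzcoords n (ones n)" "i < n"
  shows "face_coord ((ones n)[i := 2]) i 0 v = v[i := 0]"
    and "face_coord ((ones n)[i := 2]) i 1 v = v"
    and "face_coord ((ones n)[i := 2]) i 2 v = v"
    and "face_coord ((ones n)[i := 2]) i 0 (lift_coord i v) = v"
    and "face_coord ((ones n)[i := 2]) i 1 (lift_coord i v) = v"
    and "face_coord ((ones n)[i := 2]) i 2 (lift_coord i v) = v[i := 0]"
  using nzcoords_ones_nth_cases[OF assms] nzcoords_onesD(1)[OF assms(1)] assms(2)
  by (auto simp: face_coord_def lift_coord_def)

lemma faces_hochschild:
  assumes "vars p \<subseteq> nzcoords n (ones n)" "i < n"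
  shows "face ((ones n)[i := 2]) i 0 p = collapse n i p"
    and "face ((ones n)[i := 2]) i 1 p = p"
    and "face ((ones n)[i := 2]) i 2 p = p"
    and "face ((ones n)[i := 2]) i 0 (lift i p) = p"
    and "face ((ones n)[i := 2]) i 1 (lift i p) = p"
    and "face ((ones n)[i := 2]) i 2 (lift i p) = collapse n i p"
proof -
  let ?W = "(ones n)[i := 2]"
  have vp: "v \<in> nzcoords n (ones n)" if "v \<in> vars p" for v
    using assms(1) that by blast
  have plain: "face ?W i j p = msubst (\<lambda>v. tvar n (face_coord ?W i j v)) p" for j
    unfolding face_eq_msubst_tvar by (rule msubst_cong) (simp add: nzcoords_onesD(1)[OF vp])
  have lifted: "face ?W i j (lift i p) = msubst (\<lambda>v. tvar n (face_coord ?W i j (lift_coord i v))) p" for j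
    unfolding face_eq_msubst_tvar lift_def msubst_msubst
    by (rule msubst_cong) (simp add: nzcoords_onesD(1)[OF vp] lift_coord_def)
  have id: "p = msubst (tvar n) p"
    using msubst_tvar_id[OF assms(1)] by simp
  show "face ?W i 0 p = collapse n i p"
    unfolding plain collapse_def by (rule msubst_cong) (simp add: face_coord_hochschild[simplified] vp assms(2))
  show "face ?W i 1 p = p" "face ?W i 2 p = p"
    unfolding plain by (subst (2) id, rule msubst_cong, simp add: face_coord_hochschild[simplified] vp assms(2))+
  show "face ?W i 0 (lift i p) = p" "face ?W i 1 (lift i p) = p"
    unfolding lifted by (subst (2) id, rule msubst_cong, simp add: face_coord_hochschild[simplified] vp assms(2))+
  show "face ?W i 2 (lift i p) = collapse n i p"
    unfolding lifted collapse_def by (rule msubst_cong) (simp add: face_coord_hochschild[simplified] vp assms(2))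
qed

lemma face_mult: "face V i j (p * q) = face V i j p * face V i j q"
  by (simp add: face_def msubst_mult)

lemma dir_d_hochschild:
  assumes "vars p \<subseteq> nzcoords n (ones n)" "vars q \<subseteq> nzcoords n (ones n)" "i < n"
  shows "dir_d ((ones n)[i := 2]) i (lift i p * q) = p * collapse n i q - p * q + collapse n i p * q"
proof -
  have "{..(ones n)[i := 2] ! i} = {0, 1, 2}"
    using assms(3) by auto
  then show ?thesis
    using faces_hochschild[OF assms(1,3)] faces_hochschild[OF assms(2,3)]
    by (simp add: dir_d_def face_mult)
qed

lemma dir_d_eq_0_if_degree_1:
  assumes "l < length V" "V ! l = 1" "vars X \<subseteq> nzcoords (length V) V"
  shows "dir_d V l X = 0"
proof -
  have "face V l 0 X = face V l 1 X"
    unfolding face_eq_msubst_tvar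
  proof (rule msubst_cong)
    fix v assume "v \<in> vars X"
    then have "v \<in> nzcoords (length V) V"
      using assms(3) by blast
    then have "v ! l \<le> 1"
      using assms(1,2) by (auto simp: nzcoords_def)
    then show "tvar (length v) (face_coord V l 0 v) = tvar (length v) (face_coord V l 1 v)"
      using assms(2) by (auto simp: face_coord_def)
  qed
  then show ?thesis
    by (simp add: dir_d_def assms(2))
qed

lemma bump_eq_ones_bumped_iff:
  assumes "length V = n" "i < n"
  shows "V[i := Suc (V ! i)] = (ones n)[i := 2] \<longleftrightarrow> V = ones n"
proof
  assume bumped: "V[i := Suc (V ! i)] = (ones n)[i := 2]"
  then have "V ! i = 1"
    using assms by (metis nth_list_update_eq length_ones Suc_1 Suc_inject)
  then have "V = (V[i := Suc (V ! i)])[i := 1]"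
    by (metis list_update_id list_update_overwrite)
  also have "\<dots> = ones n"
    using bumped assms(2) by (metis list_update_id list_update_overwrite nth_ones)
  finally show "V = ones n" .
qed (use assms in \<open>simp add: numeral_2_eq_2\<close>)

text \<open>A chain concentrated in multi-degree \<open>1\<^sub>n + e\<^sub>i\<close> has boundary only in direction \<open>i\<close>:
  in every other direction that degree is 1, where the differential vanishes.\<close>

lemma tot_d_concentrated:
  assumes "i < n" "vars C \<subseteq> nzcoords n ((ones n)[i := 2])" "length V = n"
  shows "tot_d n (\<lambda>V'. if V' = (ones n)[i := 2] then C else 0) V =
    (if V = ones n then (-1) ^ i * dir_d ((ones n)[i := 2]) i C else 0)"
proof -
  let ?W = "(ones n)[i := 2]"
  have "(let V' = V[l := Suc (V ! l)] in dir_d V' l (if V' = ?W then C else 0)) =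
      (if l = i \<and> V = ones n then dir_d ?W i C else 0)" if "l < n" for l
  proof (cases "V[l := Suc (V ! l)] = ?W")
    case True
    then have "(let V' = V[l := Suc (V ! l)] in dir_d V' l (if V' = ?W then C else 0)) = dir_d ?W l C"
      by (simp add: Let_def)
    moreover have "dir_d ?W l C = (if l = i \<and> V = ones n then dir_d ?W i C else 0)"
    proof (cases "l = i")
      case True
      then show ?thesis
        using \<open>V[l := Suc (V ! l)] = ?W\<close> bump_eq_ones_bumped_iff assms(1,3) by simp
    next
      case False
      then show ?thesis
        using \<open>l < n\<close> assms by (simp add: dir_d_eq_0_if_degree_1)
    qed
    ultimately show ?thesis
      by simp
  next
    case False
    then show ?thesis
      using bump_eq_ones_bumped_iff[OF assms(3,1)] by auto
  qed
  then have "tot_d n (\<lambda>V'. if V' = ?W then C else 0) V =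
      (\<Sum>l<n. (-1) ^ sum_list (take l V) * (if l = i \<and> V = ones n then dir_d ?W i C else 0))"
    unfolding tot_d_def by (intro sum.cong) simp_all
  also have "\<dots> = (if V = ones n then (-1) ^ i * dir_d ?W i C else 0)"
    using assms(1) by (simp add: if_distrib sum.delta ones_def sum_list_replicate cong: if_cong)
  finally show ?thesis .
qed

lemma sim1_0_dir_d_hochschild:
  assumes "i < n" "vars C \<subseteq> nzcoords n ((ones n)[i := 2])"
  shows "sim1 n (dir_d ((ones n)[i := 2]) i C) 0"
proof -
  have "sim1 n ((-1) ^ i * dir_d ((ones n)[i := 2]) i C) 0"
    unfolding sim1_0_iff is_boundary_def using assms tot_d_concentrated[OF assms]
    by (intro exI[of _ "\<lambda>V. if V = (ones n)[i := 2] then C else 0"]) auto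
  then show ?thesis
    by (simp only: sim1_0_neg_one_power_mult_iff)
qed

lemma lift_coord_mem_nzcoords:
  assumes "v \<in> nzcoords n (ones n)" "i < n"
  shows "v \<in> nzcoords n ((ones n)[i := 2])" "lift_coord i v \<in> nzcoords n ((ones n)[i := 2])"
proof -
  note v = nzcoords_onesD[OF assms(1)]
  have le: "v[i := m] ! k \<le> (ones n)[i := 2] ! k" if "k < n" "m \<le> 2" for k m
    using v(2)[OF \<open>k < n\<close>] that v(1) by (cases "k = i") auto
  have "v ! k \<le> (ones n)[i := 2] ! k" if "k < n" for k
    using le[OF that, of "v ! i"] v(2)[OF assms(2)] by simp
  then show "v \<in> nzcoords n ((ones n)[i := 2])"
    using v(1,3) by (simp add: nzcoords_def)
  have "v[i := 2] ! i \<noteq> replicate n 0 ! i"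
    using v(1) assms(2) by simp
  then have "v[i := 2] \<in> nzcoords n ((ones n)[i := 2])"
    using le[of _ 2] v(1) by (auto simp: nzcoords_def)
  then show "lift_coord i v \<in> nzcoords n ((ones n)[i := 2])"
    using \<open>v \<in> nzcoords n ((ones n)[i := 2])\<close> by (simp add: lift_coord_def)
qed

lemma vars_lift_mult:
  assumes "vars p \<subseteq> nzcoords n (ones n)" "vars q \<subseteq> nzcoords n (ones n)" "i < n"
  shows "vars (lift i p * q) \<subseteq> nzcoords n ((ones n)[i := 2])"
proof -
  have "vars (lift i p) \<subseteq> (\<Union>v\<in>vars p. vars (mvar (lift_coord i v)))"
    unfolding lift_def by (rule vars_msubst)
  also have "\<dots> \<subseteq> nzcoords n ((ones n)[i := 2])"
    using lift_coord_mem_nzcoords(2) assms(1,3) by auto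
  finally show ?thesis
    using vars_mult lift_coord_mem_nzcoords(1) assms(2,3) by blast
qed

theorem sim1_hochschild:
  assumes "vars p \<subseteq> nzcoords n (ones n)" "vars q \<subseteq> nzcoords n (ones n)" "i < n"
  shows "sim1 n (p * q) (p * collapse n i q + collapse n i p * q)"
proof -
  have "sim1 n (p * collapse n i q - p * q + collapse n i p * q) 0"
    using sim1_0_dir_d_hochschild[OF assms(3) vars_lift_mult[OF assms]] dir_d_hochschild[OF assms]
    by simp
  then have "sim1 n (- (p * collapse n i q - p * q + collapse n i p * q)) 0"
    by (rule sim1_0_uminus)
  then show ?thesis
    unfolding sim1_iff_diff[of n "p * q"] by (simp add: algebra_simps)
qed

corollary collapse_sim1_0:
  assumes "vars q \<subseteq> nzcoords n (ones n)" "i < n"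
  shows "sim1 n (collapse n i q) 0"
proof -
  have "sim1 n q (collapse n i q + q)"
    using sim1_hochschild[of 1 n q i] assms by simp
  then have "sim1 n (- collapse n i q) 0"
    unfolding sim1_iff_diff[of n q] by simp
  then show ?thesis
    using sim1_0_uminus by fastforce
qed

section \<open>Products of entries\<close>

lemma bincoords_iff: "v \<in> bincoords n \<longleftrightarrow> length v = n \<and> (\<forall>l<n. v ! l \<le> 1)"
  by (fastforce simp: bincoords_def in_set_conv_nth le_Suc_eq)

lemma bincoordsD:
  assumes "v \<in> bincoords n"
  shows "length v = n" "l < n \<Longrightarrow> v ! l \<le> 1"
  using assms by (simp_all add: bincoords_iff)

lemma bincoords_update_0: "v \<in> bincoords n \<Longrightarrow> v[i := 0] \<in> bincoords n"
  by (cases "i < length v") (auto simp: bincoords_iff nth_list_update list_update_beyond)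

lemma finite_bincoords: "finite (bincoords n)"
proof -
  have "bincoords n \<subseteq> {xs. set xs \<subseteq> {0, 1} \<and> length xs = n}"
    by (auto simp: bincoords_def)
  then show ?thesis
    using finite_lists_length_eq[of "{0::nat, 1}" n] finite_subset by blast
qed

lemma replicate_update_same: "(replicate n x)[i := x] = replicate n x"
  by (induction n arbitrary: i) (auto split: nat.split)

lemma entry_nonzero: "v \<noteq> replicate n 0 \<Longrightarrow> entry n v x = (\<Sum>k\<le>degree x. mconst (coeff x k) * mvar v ^ k)"
  by (simp add: entry_def)

lemma vars_entry:
  assumes "v \<in> bincoords n"
  shows "vars (entry n v x) \<subseteq> nzcoords n (ones n)"
proof (cases "v = replicate n 0")
  case False
  have "vars (entry n v x) \<subseteq> (\<Union>k\<in>{..degree x}. vars (mconst (coeff x k) * mvar v ^ k))"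
    unfolding entry_nonzero[OF False] by (rule vars_sum)
  also have "\<dots> \<subseteq> {v}"
    using vars_mult vars_power by fastforce
  also have "{v} \<subseteq> nzcoords n (ones n)"
    using assms False by (simp add: nzcoords_def bincoords_iff)
  finally show ?thesis .
qed (simp add: entry_def)

lemma collapse_entry:
  assumes "v \<in> bincoords n" "i < n"
  shows "collapse n i (entry n v x) = entry n (v[i := 0]) x"
proof (cases "v = replicate n 0")
  case False
  have expand: "collapse n i (entry n v x) = (\<Sum>k\<le>degree x. mconst (coeff x k) * tvar n (v[i := 0]) ^ k)"
    by (simp add: entry_nonzero[OF False] collapse_def msubst_sum msubst_mult msubst_power)
  show ?thesis
  proof (cases "v[i := 0] = replicate n 0")
    case True
    have "(\<Sum>k\<le>degree x. mconst (coeff x k) * (0::mpoly) ^ k) = mconst (coeff x 0)"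
      by (simp add: zero_power sum.atMost_shift)
    then show ?thesis
      unfolding expand using True by (simp add: tvar_def entry_def poly_0_coeff_0)
  qed (simp add: expand tvar_def entry_nonzero)
qed (simp add: entry_def collapse_def replicate_update_same)

lemma length_vsum [simp]: "length (vsum n ws) = n"
  by (simp add: vsum_def)

lemma vsum_nth: "l < n \<Longrightarrow> vsum n ws ! l = (\<Sum>j<length ws. ws ! j ! l)"
  by (simp add: vsum_def sum_list_sum_nth atLeast0LessThan)

lemma vsum_eq_ones_iff: "vsum n ws = ones n \<longleftrightarrow> (\<forall>l<n. (\<Sum>j<length ws. ws ! j ! l) = 1)"
  by (simp add: list_eq_iff_nth_eq vsum_nth)

lemma sum_eq_1_others_zero_iff:
  fixes f :: "'a \<Rightarrow> nat"
  assumes "finite A" "a \<in> A" "sum f A = 1"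
  shows "(\<forall>j\<in>A - {a}. f j = 0) \<longleftrightarrow> f a \<noteq> 0"
proof -
  have "f a + sum f (A - {a}) = 1"
    using assms by (simp add: sum.remove)
  moreover have "(\<forall>j\<in>A - {a}. f j = 0) \<longleftrightarrow> sum f (A - {a}) = 0"
    using assms(1) by simp
  ultimately show ?thesis
    by presburger
qed

lemma sum_ge_2_obtains_two_nonzero:
  fixes f :: "'a \<Rightarrow> nat"
  assumes "finite A" "\<And>j. j \<in> A \<Longrightarrow> f j \<le> 1" "2 \<le> sum f A"
  obtains j0 j1 where "j0 \<in> A" "j1 \<in> A" "j0 \<noteq> j1" "f j0 \<noteq> 0" "f j1 \<noteq> 0"
proof -
  obtain j0 where j0: "j0 \<in> A" "f j0 \<noteq> 0"
    using assms(3) sum.neutral[of A f] by fastforce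
  have "sum f A = f j0 + sum f (A - {j0})"
    using assms(1) j0(1) by (simp add: sum.remove)
  then have "sum f (A - {j0}) \<noteq> 0"
    using assms(2,3) j0(1) by fastforce
  then obtain j1 where "j1 \<in> A - {j0}" "f j1 \<noteq> 0"
    using assms(1) by auto
  then show ?thesis
    using that j0 by blast
qed

lemma sum_list_update_0_le: "sum_list (v[i := 0]) \<le> sum_list (v :: nat list)"
  by (cases "i < length v") (simp_all add: sum_list_update list_update_beyond)

lemma sum_list_update_0_less:
  "i < length v \<Longrightarrow> v ! i \<noteq> 0 \<Longrightarrow> sum_list (v[i := 0]) < sum_list (v :: nat list)"
  using elem_le_sum_list[of i v] by (simp add: sum_list_update)

definition zero_coord_at :: "nat set \<Rightarrow> nat \<Rightarrow> nat list list \<Rightarrow> nat list list" where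
  "zero_coord_at J i vs = map (\<lambda>j. if j \<in> J then (vs ! j)[i := 0] else vs ! j) [0..<length vs]"

lemma length_zero_coord_at [simp]: "length (zero_coord_at J i vs) = length vs"
  by (simp add: zero_coord_at_def)

lemma nth_zero_coord_at [simp]:
  "j < length vs \<Longrightarrow> zero_coord_at J i vs ! j = (if j \<in> J then (vs ! j)[i := 0] else vs ! j)"
  by (simp add: zero_coord_at_def)

lemma zero_coord_at_bincoords:
  assumes "set vs \<subseteq> bincoords n"
  shows "set (zero_coord_at J i vs) \<subseteq> bincoords n"
proof
  fix w assume "w \<in> set (zero_coord_at J i vs)"
  then obtain j where "j < length vs" "w = zero_coord_at J i vs ! j"
    by (auto simp: in_set_conv_nth)
  moreover have "vs ! j \<in> bincoords n"
    using assms nth_mem[OF \<open>j < length vs\<close>] by blast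
  ultimately show "w \<in> bincoords n"
    by (simp add: bincoords_update_0)
qed

lemma weight_zero_coord_at_less:
  assumes "j \<in> J" "j < length vs" "i < length (vs ! j)" "vs ! j ! i \<noteq> 0"
  shows "(\<Sum>j<length vs. sum_list (zero_coord_at J i vs ! j)) < (\<Sum>j<length vs. sum_list (vs ! j))"
proof (rule sum_strict_mono_ex1)
  show "\<forall>j\<in>{..<length vs}. sum_list (zero_coord_at J i vs ! j) \<le> sum_list (vs ! j)"
    by (simp add: sum_list_update_0_le)
  show "\<exists>j\<in>{..<length vs}. sum_list (zero_coord_at J i vs ! j) < sum_list (vs ! j)"
    using assms sum_list_update_0_less by force
qed simp

definition splittings :: "nat \<Rightarrow> nat list list \<Rightarrow> nat list list set" where
  "splittings n vs = {ws. length ws = length vs \<and>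
     (\<forall>j<length vs. ws ! j \<in> bincoords n \<and> (\<forall>l<n. ws ! j ! l \<le> vs ! j ! l)) \<and> vsum n ws = ones n}"

lemma finite_splittings: "finite (splittings n vs)"
proof -
  have "splittings n vs \<subseteq> {ws. set ws \<subseteq> bincoords n \<and> length ws = length vs}"
    by (auto simp: splittings_def in_set_conv_nth)
  then show ?thesis
    using finite_lists_length_eq[OF finite_bincoords] finite_subset by blast
qed

lemma splittings_memD:
  assumes "ws \<in> splittings n vs"
  shows "length ws = length vs" "j < length vs \<Longrightarrow> ws ! j \<in> bincoords n"
    "j < length vs \<Longrightarrow> l < n \<Longrightarrow> ws ! j ! l \<le> vs ! j ! l"
    "l < n \<Longrightarrow> (\<Sum>j<length vs. ws ! j ! l) = 1"
  using assms by (auto simp: splittings_def vsum_eq_ones_iff)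

lemma splittings_zero_coord_at:
  assumes "set vs \<subseteq> bincoords n" "i < n" "J \<subseteq> {..<length vs}"
  shows "splittings n (zero_coord_at J i vs) = {ws \<in> splittings n vs. \<forall>j\<in>J. ws ! j ! i = 0}"
proof -
  have bound: "(\<forall>l<n. w ! l \<le> zero_coord_at J i vs ! j ! l) \<longleftrightarrow>
      (\<forall>l<n. w ! l \<le> vs ! j ! l) \<and> (j \<in> J \<longrightarrow> w ! i = 0)" if "j < length vs" for w j
  proof (cases "j \<in> J")
    case True
    have "length (vs ! j) = n"
      using assms(1) nth_mem[OF that] by (blast intro: bincoordsD(1))
    then have "(vs ! j)[i := 0] ! l = (if l = i then 0 else vs ! j ! l)" if "l < n" for l
      using that assms(2) by (simp add: nth_list_update)
    then show ?thesis
      using True \<open>j < length vs\<close> assms(2) by (metis le_zero_eq nth_zero_coord_at zero_le)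
  qed (simp add: that)
  have "ws \<in> splittings n (zero_coord_at J i vs) \<longleftrightarrow> ws \<in> splittings n vs \<and> (\<forall>j\<in>J. ws ! j ! i = 0)" for ws
    unfolding splittings_def using bound assms(3) by auto
  then show ?thesis
    by blast
qed

lemma splittings_partition:
  assumes "set vs \<subseteq> bincoords n" "i < n" "j0 < length vs"
  shows "splittings n vs = splittings n (zero_coord_at ({..<length vs} - {j0}) i vs)
      \<union> splittings n (zero_coord_at {j0} i vs)"
    and "splittings n (zero_coord_at ({..<length vs} - {j0}) i vs)
      \<inter> splittings n (zero_coord_at {j0} i vs) = {}"
proof -
  have key: "(\<forall>j\<in>{..<length vs} - {j0}. ws ! j ! i = 0) \<longleftrightarrow> ws ! j0 ! i \<noteq> 0"
    if "ws \<in> splittings n vs" for ws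
  proof -
    have "(\<Sum>j<length vs. ws ! j ! i) = 1"
      using splittings_memD(4)[OF that assms(2)] .
    then show ?thesis
      using sum_eq_1_others_zero_iff[of "{..<length vs}" j0 "\<lambda>j. ws ! j ! i"] assms(3) by simp
  qed
  have "splittings n (zero_coord_at ({..<length vs} - {j0}) i vs) =
      {ws \<in> splittings n vs. \<forall>j\<in>{..<length vs} - {j0}. ws ! j ! i = 0}"
    using assms by (intro splittings_zero_coord_at) auto
  also have "\<dots> = {ws \<in> splittings n vs. ws ! j0 ! i \<noteq> 0}"
    using key by blast
  finally have "splittings n (zero_coord_at ({..<length vs} - {j0}) i vs) =
      {ws \<in> splittings n vs. ws ! j0 ! i \<noteq> 0}" .
  moreover have "splittings n (zero_coord_at {j0} i vs) = {ws \<in> splittings n vs. ws ! j0 ! i = 0}"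
    using assms by (simp add: splittings_zero_coord_at)
  ultimately show "splittings n vs = splittings n (zero_coord_at ({..<length vs} - {j0}) i vs)
      \<union> splittings n (zero_coord_at {j0} i vs)"
    and "splittings n (zero_coord_at ({..<length vs} - {j0}) i vs)
      \<inter> splittings n (zero_coord_at {j0} i vs) = {}"
    by blast+
qed

lemma splittings_eq_empty:
  assumes "i < n" "\<forall>j<length vs. vs ! j ! i = 0"
  shows "splittings n vs = {}"
proof -
  have "(\<Sum>j<length vs. ws ! j ! i) = 0" if "ws \<in> splittings n vs" for ws
    using splittings_memD(3)[OF that _ assms(1)] assms(2) by simp
  then show ?thesis
    using splittings_memD(4)[OF _ assms(1)] by fastforce
qed

lemma splittings_eq_singleton:
  assumes "set vs \<subseteq> bincoords n" "vsum n vs = ones n"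
  shows "splittings n vs = {vs}"
proof -
  have bin: "vs ! j \<in> bincoords n" if "j < length vs" for j
    using assms(1) nth_mem[OF that] by blast
  have "ws = vs" if ws: "ws \<in> splittings n vs" for ws
  proof -
    have "ws ! j ! l = vs ! j ! l" if "j < length vs" "l < n" for j l
    proof (rule sum_mono_inv[of "\<lambda>j. ws ! j ! l" "{..<length vs}"])
      show "(\<Sum>j<length vs. ws ! j ! l) = (\<Sum>j<length vs. vs ! j ! l)"
        using splittings_memD(4)[OF ws \<open>l < n\<close>] assms(2) \<open>l < n\<close> by (simp add: vsum_eq_ones_iff)
    qed (use splittings_memD(3)[OF ws _ \<open>l < n\<close>] that in auto)
    moreover have "length (ws ! j) = n" "length (vs ! j) = n" if "j < length vs" for j
      using bincoordsD(1) splittings_memD(2)[OF ws that] bin[OF that] by auto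
    ultimately show ?thesis
      using splittings_memD(1)[OF ws] by (simp add: list_eq_iff_nth_eq)
  qed
  moreover have "vs \<in> splittings n vs"
    using assms(2) bin by (simp add: splittings_def)
  ultimately show ?thesis
    by blast
qed

definition entries_prod :: "nat \<Rightarrow> (nat \<Rightarrow> rat poly) \<Rightarrow> nat list list \<Rightarrow> mpoly" where
  "entries_prod n x vs = (\<Prod>j<length vs. entry n (vs ! j) (x j))"

lemma vars_entries_prod:
  assumes "set vs \<subseteq> bincoords n"
  shows "vars (entries_prod n x vs) \<subseteq> nzcoords n (ones n)"
proof -
  have "vars (entries_prod n x vs) \<subseteq> (\<Union>j<length vs. vars (entry n (vs ! j) (x j)))"
    unfolding entries_prod_def by (rule vars_prod)
  also have "\<dots> \<subseteq> nzcoords n (ones n)"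
    using assms nth_mem by (intro UN_least vars_entry) auto
  finally show ?thesis .
qed

lemma entries_prod_zero_coord_at:
  assumes "set vs \<subseteq> bincoords n" "i < n"
  shows "entries_prod n x (zero_coord_at J i vs) =
    (\<Prod>j<length vs. (if j \<in> J then collapse n i else id) (entry n (vs ! j) (x j)))"
proof -
  have "entry n (zero_coord_at J i vs ! j) (x j) = (if j \<in> J then collapse n i else id) (entry n (vs ! j) (x j))"
    if "j < length vs" for j
  proof -
    have "vs ! j \<in> bincoords n"
      using assms(1) nth_mem[OF that] by blast
    then show ?thesis
      using that by (simp add: collapse_entry assms(2))
  qed
  then show ?thesis
    unfolding entries_prod_def by (intro prod.cong) simp_all
qed

lemma entries_prod_sim1_0_if_uncovered:
  assumes "set vs \<subseteq> bincoords n" "i < n" "\<forall>j<length vs. vs ! j ! i = 0"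
  shows "sim1 n (entries_prod n x vs) 0"
proof -
  have "(vs ! j)[i := 0] = vs ! j" if "j < length vs" for j
    using assms(3) that by (metis list_update_id)
  then have "zero_coord_at {..<length vs} i vs = vs"
    by (simp add: list_eq_iff_nth_eq)
  then have "entries_prod n x vs = (\<Prod>j<length vs. collapse n i (entry n (vs ! j) (x j)))"
    using entries_prod_zero_coord_at[OF assms(1,2), of x "{..<length vs}"] by simp
  also have "\<dots> = collapse n i (entries_prod n x vs)"
    by (simp add: entries_prod_def collapse_prod)
  finally have fixed: "entries_prod n x vs = collapse n i (entries_prod n x vs)" .
  show ?thesis
    by (subst fixed) (rule collapse_sim1_0[OF vars_entries_prod[OF assms(1)] assms(2)])
qed

lemma entries_prod_sim1_split:
  assumes "set vs \<subseteq> bincoords n" "i < n" "j0 < length vs"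
  shows "sim1 n (entries_prod n x vs)
    (entries_prod n x (zero_coord_at ({..<length vs} - {j0}) i vs) + entries_prod n x (zero_coord_at {j0} i vs))"
proof -
  define p where "p = entry n (vs ! j0) (x j0)"
  define q where "q = (\<Prod>j\<in>{..<length vs} - {j0}. entry n (vs ! j) (x j))"
  have bin: "vs ! j \<in> bincoords n" if "j < length vs" for j
    using assms(1) nth_mem[OF that] by blast
  have "entries_prod n x vs = p * q"
    unfolding entries_prod_def p_def q_def using assms(3) by (simp add: prod.remove)
  moreover have "entries_prod n x (zero_coord_at ({..<length vs} - {j0}) i vs) = p * collapse n i q"
  proof -
    have "(\<Prod>j\<in>{..<length vs} - {j0}. (if j \<in> {..<length vs} - {j0} then collapse n i else id)
        (entry n (vs ! j) (x j))) = collapse n i q"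
      unfolding q_def collapse_prod by (rule prod.cong) auto
    then show ?thesis
      unfolding entries_prod_zero_coord_at[OF assms(1,2)] p_def using assms(3) by (simp add: prod.remove)
  qed
  moreover have "entries_prod n x (zero_coord_at {j0} i vs) = collapse n i p * q"
  proof -
    have "(\<Prod>j\<in>{..<length vs} - {j0}. (if j \<in> {j0} then collapse n i else id)
        (entry n (vs ! j) (x j))) = q"
      unfolding q_def by (rule prod.cong) auto
    then show ?thesis
      unfolding entries_prod_zero_coord_at[OF assms(1,2)] p_def using assms(3) by (simp add: prod.remove)
  qed
  moreover have "vars p \<subseteq> nzcoords n (ones n)"
    unfolding p_def using bin[OF assms(3)] by (rule vars_entry)
  moreover have "vars q \<subseteq> nzcoords n (ones n)"
  proof -
    have "vars q \<subseteq> (\<Union>j\<in>{..<length vs} - {j0}. vars (entry n (vs ! j) (x j)))"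
      unfolding q_def by (rule vars_prod)
    also have "\<dots> \<subseteq> nzcoords n (ones n)"
      using bin by (intro UN_least vars_entry) auto
    finally show ?thesis .
  qed
  ultimately show ?thesis
    using sim1_hochschild assms(2) by simp
qed

lemma vsum_column_cases:
  obtains (uncovered) i where "i < n" "vsum n vs ! i = 0"
    | (shared) i where "i < n" "2 \<le> vsum n vs ! i"
    | (exact) "vsum n vs = ones n"
proof -
  have "vsum n vs = ones n" if col: "\<And>i. i < n \<Longrightarrow> vsum n vs ! i \<noteq> 0 \<and> vsum n vs ! i < 2"
  proof (rule nth_equalityI)
    fix i assume "i < length (vsum n vs)"
    then show "vsum n vs ! i = ones n ! i"
      using col[of i] by (auto simp: less_2_cases_iff)
  qed simp
  then show thesis
    using that by (meson not_le)
qed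

lemma shared_column_obtains:
  assumes "set vs \<subseteq> bincoords n" "i < n" "2 \<le> vsum n vs ! i"
  obtains j0 j1 where "j0 < length vs" "j1 < length vs" "j0 \<noteq> j1" "vs ! j0 ! i \<noteq> 0" "vs ! j1 ! i \<noteq> 0"
proof -
  have "vs ! j ! i \<le> 1" if "j \<in> {..<length vs}" for j
  proof -
    have "vs ! j \<in> bincoords n"
      using assms(1) nth_mem[of j vs] that by auto
    then show ?thesis
      using bincoordsD(2) assms(2) by blast
  qed
  moreover have "2 \<le> (\<Sum>j<length vs. vs ! j ! i)"
    using assms(2,3) by (simp add: vsum_nth)
  ultimately obtain j0 j1 where "j0 \<in> {..<length vs}" "j1 \<in> {..<length vs}" "j0 \<noteq> j1"
    "vs ! j0 ! i \<noteq> 0" "vs ! j1 ! i \<noteq> 0"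
    by (rule sum_ge_2_obtains_two_nonzero[of "{..<length vs}" "\<lambda>j. vs ! j ! i", OF finite_lessThan])
  then show thesis
    using that by simp
qed

theorem entries_prod_sim1_sum_splittings:
  assumes "set vs \<subseteq> bincoords n"
  shows "sim1 n (entries_prod n x vs) (\<Sum>ws\<in>splittings n vs. entries_prod n x ws)"
  using assms
proof (induction "\<Sum>j<length vs. sum_list (vs ! j)" arbitrary: vs rule: less_induct)
  case less
  show ?case
  proof (cases rule: vsum_column_cases[of n vs])
    case (uncovered i)
    then have "\<forall>j<length vs. vs ! j ! i = 0"
      by (simp add: vsum_nth)
    then show ?thesis
      using entries_prod_sim1_0_if_uncovered[OF less.prems uncovered(1)] splittings_eq_empty[OF uncovered(1)]
      by simp
  next
    case (shared i)
    obtain j0 j1 where j: "j0 < length vs" "j1 < length vs" "j0 \<noteq> j1" "vs ! j0 ! i \<noteq> 0" "vs ! j1 ! i \<noteq> 0"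
      using shared_column_obtains[OF less.prems shared] .
    have IH: "sim1 n (entries_prod n x (zero_coord_at J i vs))
        (\<Sum>ws\<in>splittings n (zero_coord_at J i vs). entries_prod n x ws)"
      if "j \<in> J" "j < length vs" "vs ! j ! i \<noteq> 0" for J j
    proof (rule less.hyps)
      have "i < length (vs ! j)"
        using less.prems nth_mem[OF \<open>j < length vs\<close>] bincoordsD(1) shared(1) by auto
      then show "(\<Sum>j<length (zero_coord_at J i vs). sum_list (zero_coord_at J i vs ! j)) <
          (\<Sum>j<length vs. sum_list (vs ! j))"
        using weight_zero_coord_at_less[OF that(1,2) _ that(3)] by simp
    qed (rule zero_coord_at_bincoords[OF less.prems])
    let ?V1 = "zero_coord_at ({..<length vs} - {j0}) i vs" and ?V2 = "zero_coord_at {j0} i vs"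
    have "sim1 n (entries_prod n x vs) (entries_prod n x ?V1 + entries_prod n x ?V2)"
      by (rule entries_prod_sim1_split[OF less.prems shared(1) j(1)])
    also have "sim1 n \<dots> ((\<Sum>ws\<in>splittings n ?V1. entries_prod n x ws) + (\<Sum>ws\<in>splittings n ?V2. entries_prod n x ws))"
      using IH[of j1] IH[of j0] j by (intro sim1_add) auto
    also have "\<dots> = (\<Sum>ws\<in>splittings n vs. entries_prod n x ws)"
      unfolding splittings_partition(1)[OF less.prems shared(1) j(1)]
      by (rule sum.union_disjoint[symmetric])
        (simp_all add: finite_splittings splittings_partition(2)[OF less.prems shared(1) j(1)])
    finally show ?thesis .
  next
    case exact
    then show ?thesis
      using splittings_eq_singleton[OF less.prems] sim1_refl by simp
  qed
qed

lemma entries_prod_pair: "entries_prod n ((!) [x, y]) [v, w] = entry n v x * entry n w y"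
  by (simp add: entries_prod_def lessThan_Suc numeral_2_eq_2)

lemma entries_prod_single: "entries_prod n (\<lambda>_. x) [v] = entry n v x"
  by (simp add: entries_prod_def)

lemma entry_mult_sim1_0_if_common_zero:
  assumes "v \<in> bincoords n" "w \<in> bincoords n" "i < n" "v ! i = 0" "w ! i = 0"
  shows "sim1 n (entry n v x * entry n w y) 0"
proof -
  have "sim1 n (entries_prod n ((!) [x, y]) [v, w]) 0"
    by (rule entries_prod_sim1_0_if_uncovered) (use assms in \<open>auto simp: less_Suc_eq\<close>)
  then show ?thesis
    by (simp only: entries_prod_pair)
qed

lemma entry_sim1_0_if_not_ones:
  assumes "v \<in> bincoords n" "v \<noteq> ones n"
  shows "sim1 n (entry n v x) 0"
proof -
  have "\<exists>i<n. v ! i \<noteq> 1"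
  proof (rule ccontr)
    assume "\<not> (\<exists>i<n. v ! i \<noteq> 1)"
    then have "v = ones n"
      using bincoordsD(1)[OF assms(1)] by (simp add: list_eq_iff_nth_eq)
    with assms(2) show False ..
  qed
  then obtain i where "i < n" "v ! i = 0"
    using bincoordsD(2)[OF assms(1)] by (metis le_neq_implies_less less_one)
  then have "sim1 n (entries_prod n (\<lambda>_. x) [v]) 0"
    by (intro entries_prod_sim1_0_if_uncovered) (use assms(1) in \<open>auto simp: less_Suc_eq\<close>)
  then show ?thesis
    by (simp only: entries_prod_single)
qed

lemma vsum_pair:
  assumes "length a = n" "length b = n"
  shows "vsum n [a, b] = map2 (+) a b"
  using assms by (simp add: vsum_def list_eq_iff_nth_eq)

lemma pair_mem_splittings_iff:
  assumes "v \<in> bincoords n" "w \<in> bincoords n"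
  shows "[a, b] \<in> splittings n [v, w] \<longleftrightarrow> a \<in> bincoords n \<and> b \<in> bincoords n \<and>
    list_all2 (\<le>) a v \<and> list_all2 (\<le>) b w \<and> map2 (+) a b = ones n"
proof -
  have "(\<forall>j<2. [a, b] ! j \<in> bincoords n \<and> (\<forall>l<n. [a, b] ! j ! l \<le> [v, w] ! j ! l)) \<longleftrightarrow>
      a \<in> bincoords n \<and> b \<in> bincoords n \<and> list_all2 (\<le>) a v \<and> list_all2 (\<le>) b w"
    using assms by (auto simp: less_2_cases_iff list_all2_conv_all_nth bincoords_iff)
  then show ?thesis
    by (auto simp: splittings_def bincoords_iff vsum_pair)
qed

lemma entry_mult_sim1_sum:
  assumes "v \<in> bincoords n" "w \<in> bincoords n"
  shows "sim1 n (entry n v x * entry n w y)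
    (\<Sum>(v', w')\<in>{(v', w'). v' \<in> bincoords n \<and> w' \<in> bincoords n \<and>
        list_all2 (\<le>) v' v \<and> list_all2 (\<le>) w' w \<and> map2 (+) v' w' = ones n}.
      entry n v' x * entry n w' y)"
proof -
  let ?S = "{(v', w'). v' \<in> bincoords n \<and> w' \<in> bincoords n \<and>
        list_all2 (\<le>) v' v \<and> list_all2 (\<le>) w' w \<and> map2 (+) v' w' = ones n}"
  have pair: "ws = [ws ! 0, ws ! 1]" if "ws \<in> splittings n [v, w]" for ws
    using splittings_memD(1)[OF that] by (intro nth_equalityI) (auto simp: less_Suc_eq)
  have "(\<Sum>ws\<in>splittings n [v, w]. entries_prod n ((!) [x, y]) ws) =
      (\<Sum>(v', w')\<in>?S. entry n v' x * entry n w' y)"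
  proof (rule sum.reindex_bij_witness[where i = "\<lambda>(a, b). [a, b]" and j = "\<lambda>ws. (ws ! 0, ws ! 1)"])
    fix ws assume ws: "ws \<in> splittings n [v, w]"
    show "(\<lambda>(a, b). [a, b]) (ws ! 0, ws ! 1) = ws"
      using pair[OF ws] by simp
    have "[ws ! 0, ws ! 1] \<in> splittings n [v, w]"
      using ws pair[OF ws] by metis
    then show "(ws ! 0, ws ! 1) \<in> ?S"
      using pair_mem_splittings_iff[OF assms] by simp
    show "(case (ws ! 0, ws ! 1) of (v', w') \<Rightarrow> entry n v' x * entry n w' y) = entries_prod n ((!) [x, y]) ws"
      by (subst pair[OF ws]) (simp add: entries_prod_pair)
  qed (use pair_mem_splittings_iff[OF assms] in auto)
  then show ?thesis
    using entries_prod_sim1_sum_splittings[of "[v, w]" n "(!) [x, y]"] assms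
    by (simp add: entries_prod_pair)
qed

section \<open>Powers of \<open>t\<close>\<close>

lemma entry_t: "entry n w [:0, 1:] = tvar n w"
  by (simp add: entry_def tvar_def)

lemma entry_t_power:
  assumes "v \<noteq> replicate n 0"
  shows "entry n v ([:0, 1:] ^ k) = mvar v ^ k"
proof -
  have "[:0, 1:] ^ k = (monom 1 k :: rat poly)"
    by (simp add: monom_altdef)
  then have "entry n v ([:0, 1:] ^ k) = (\<Sum>j\<le>k. mconst (if k = j then 1 else 0) * mvar v ^ j)"
    using assms by (simp add: entry_nonzero degree_monom_eq coeff_monom)
  also have "\<dots> = (\<Sum>j\<le>k. if k = j then mvar v ^ j else 0)"
    by (rule sum.cong) simp_all
  finally show ?thesis
    by simp
qed

lemma entries_prod_t: "entries_prod n (\<lambda>_. [:0, 1:]) ws = (\<Prod>w\<leftarrow>ws. tvar n w)"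
  by (simp add: entries_prod_def entry_t prod.list_conv_set_nth atLeast0LessThan)

lemma prod_list_zeroI: "(0 :: 'a :: semiring_1) \<in> set xs \<Longrightarrow> prod_list xs = 0"
  by (induction xs) auto

definition decompositions :: "nat \<Rightarrow> nat \<Rightarrow> nat list list set" where
  "decompositions n k = {ws. length ws = k \<and> (\<forall>w\<in>set ws. w \<in> bincoords n \<and> w \<noteq> replicate n 0)
     \<and> vsum n ws = ones n}"

lemma t_power_sim1_sum_decompositions:
  assumes "n \<ge> 1"
  shows "sim1 n (entry n (ones n) ([:0, 1:] ^ k)) (\<Sum>ws\<in>decompositions n k. \<Prod>w\<leftarrow>ws. tvar n w)"
proof -
  have ones_nonzero: "ones n \<noteq> replicate n 0"
    using assms by (cases n) (simp_all add: ones_def)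
  have ones_bin: "ones n \<in> bincoords n"
    by (simp add: bincoords_iff)
  have "entries_prod n (\<lambda>_. [:0, 1:]) (replicate k (ones n)) = entry n (ones n) ([:0, 1:] ^ k)"
    by (simp add: entries_prod_t entry_t_power[OF ones_nonzero] tvar_def ones_nonzero)
  then have "sim1 n (entry n (ones n) ([:0, 1:] ^ k))
      (\<Sum>ws\<in>splittings n (replicate k (ones n)). \<Prod>w\<leftarrow>ws. tvar n w)"
    using entries_prod_sim1_sum_splittings[of "replicate k (ones n)" n "\<lambda>_. [:0, 1:]"] ones_bin
    by (simp add: entries_prod_t set_replicate_conv_if)
  also have "(\<Sum>ws\<in>splittings n (replicate k (ones n)). \<Prod>w\<leftarrow>ws. tvar n w) =
      (\<Sum>ws\<in>decompositions n k. \<Prod>w\<leftarrow>ws. tvar n w)"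
  proof (rule sum.mono_neutral_right[OF finite_splittings])
    show "decompositions n k \<subseteq> splittings n (replicate k (ones n))"
      by (auto simp: decompositions_def splittings_def bincoords_iff)
    show "\<forall>ws\<in>splittings n (replicate k (ones n)) - decompositions n k. (\<Prod>w\<leftarrow>ws. tvar n w) = 0"
    proof
      fix ws assume "ws \<in> splittings n (replicate k (ones n)) - decompositions n k"
      then have "replicate n 0 \<in> set ws"
        by (auto simp: decompositions_def splittings_def in_set_conv_nth)
      then show "(\<Prod>w\<leftarrow>ws. tvar n w) = 0"
        by (simp add: prod_list_zeroI tvar_def)
    qed
  qed
  finally show ?thesis .
qed

lemma sum_list_vsum:
  assumes "\<forall>w\<in>set ws. length w = n"
  shows "sum_list (vsum n ws) = (\<Sum>j<length ws. sum_list (ws ! j))"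
proof -
  have "sum_list (vsum n ws) = (\<Sum>l<n. \<Sum>j<length ws. ws ! j ! l)"
    unfolding sum_list_sum_nth length_vsum atLeast0LessThan by (rule sum.cong) (simp_all add: vsum_nth)
  also have "\<dots> = (\<Sum>j<length ws. \<Sum>l<n. ws ! j ! l)"
    by (rule sum.swap)
  also have "\<dots> = (\<Sum>j<length ws. sum_list (ws ! j))"
    using assms nth_mem by (intro sum.cong) (simp_all add: sum_list_sum_nth atLeast0LessThan)
  finally show ?thesis .
qed

lemma one_le_sum_list_if_nonzero: "w \<noteq> replicate (length w) 0 \<Longrightarrow> 1 \<le> sum_list (w :: nat list)"
  by (metis One_nat_def Suc_leI neq0_conv replicate_length_same sum_list_eq_0_iff)

lemma decompositions_weights:
  assumes "ws \<in> decompositions n k"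
  shows "(\<Sum>j<k. sum_list (ws ! j)) = n" "j < k \<Longrightarrow> 1 \<le> sum_list (ws ! j)"
proof -
  have ws: "length ws = k" "\<forall>w\<in>set ws. w \<in> bincoords n \<and> w \<noteq> replicate n 0" "vsum n ws = ones n"
    using assms by (simp_all add: decompositions_def)
  have "\<forall>w\<in>set ws. length w = n"
    using ws(2) bincoordsD(1) by blast
  then show "(\<Sum>j<k. sum_list (ws ! j)) = n"
    using sum_list_vsum[of ws n] ws(1,3) by (simp add: ones_def sum_list_replicate)
  assume "j < k"
  then show "1 \<le> sum_list (ws ! j)"
    using ws(1,2) nth_mem[of j ws] by (metis bincoordsD(1) one_le_sum_list_if_nonzero)
qed

lemma decompositions_eq_empty:
  assumes "n < k"
  shows "decompositions n k = {}"
proof -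
  have "k \<le> n" if "ws \<in> decompositions n k" for ws
  proof -
    have "k = (\<Sum>j<k. 1::nat)"
      by simp
    also have "\<dots> \<le> (\<Sum>j<k. sum_list (ws ! j))"
      using decompositions_weights(2)[OF that] by (intro sum_mono) simp
    finally show ?thesis
      using decompositions_weights(1)[OF that] by simp
  qed
  then show ?thesis
    using assms by fastforce
qed

lemma length_unit_coord [simp]: "length (unit_coord n x) = n"
  by (simp add: unit_coord_def)

lemma nth_unit_coord: "l < n \<Longrightarrow> unit_coord n x ! l = (if x = l then 1 else 0)"
  by (cases "x < n") (auto simp: unit_coord_def nth_list_update list_update_beyond)

lemma unit_coord_mem_bincoords: "unit_coord n x \<in> bincoords n"
  by (simp add: bincoords_iff nth_unit_coord)

lemma unit_coord_eq_zero_iff: "unit_coord n x = replicate n 0 \<longleftrightarrow> n \<le> x"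
  by (auto simp: list_eq_iff_nth_eq nth_unit_coord)

lemma unit_coord_if_sum_list_eq_1:
  assumes "w \<in> bincoords n" "sum_list w = 1"
  shows "\<exists>x. w = unit_coord n x"
proof -
  have sum: "(\<Sum>m<n. w ! m) = 1"
    using assms by (simp add: sum_list_sum_nth atLeast0LessThan bincoordsD(1))
  then obtain l where l: "l < n" "w ! l \<noteq> 0"
    by (metis lessThan_iff sum.neutral zero_neq_one)
  then have "\<forall>m\<in>{..<n} - {l}. w ! m = 0"
    using sum_eq_1_others_zero_iff[of "{..<n}" l "\<lambda>m. w ! m"] sum by simp
  moreover have "w ! l = 1"
    using l bincoordsD(2)[OF assms(1)] by (metis le_neq_implies_less less_one)
  ultimately have "w = unit_coord n l"
    using bincoordsD(1)[OF assms(1)] by (auto simp: list_eq_iff_nth_eq nth_unit_coord)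
  then show ?thesis ..
qed

lemma vsum_map_unit_coord: "l < n \<Longrightarrow> vsum n (map (unit_coord n) xs) ! l = count_list xs l"
  by (induction xs) (simp_all add: vsum_def nth_unit_coord)

lemma count_list_eq_1_iff_permutation:
  assumes "set xs \<subseteq> {..<n}"
  shows "(\<forall>l<n. count_list xs l = 1) \<longleftrightarrow> xs \<in> permutations_of_set {..<n}"
proof
  assume count: "\<forall>l<n. count_list xs l = 1"
  have "l \<in> set xs" if "l < n" for l
    using count that count_list_0_iff[of xs l] by auto
  then have "set xs = {..<n}"
    using assms by auto
  moreover have "distinct xs"
    unfolding distinct_count_atmost_1 count_mset using count \<open>set xs = {..<n}\<close> by auto
  ultimately show "xs \<in> permutations_of_set {..<n}"
    by (rule permutations_of_setI)
next
  assume "xs \<in> permutations_of_set {..<n}"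
  then have "set xs = {..<n}" "distinct xs"
    by (auto dest: permutations_of_setD)
  then show "\<forall>l<n. count_list xs l = 1"
    unfolding distinct_count_atmost_1 count_mset by simp
qed

lemma decompositions_self_obtains_permutation:
  assumes "ws \<in> decompositions n n"
  obtains xs where "xs \<in> permutations_of_set {..<n}" "ws = map (unit_coord n) xs"
proof -
  have len: "length ws = n" and nonzero: "\<forall>w\<in>set ws. w \<in> bincoords n \<and> w \<noteq> replicate n 0"
    and total: "vsum n ws = ones n"
    using assms by (simp_all add: decompositions_def)
  have "sum_list (ws ! j) = 1" if "j < n" for j
    using sum_mono_inv[of "\<lambda>_. 1" "{..<n}" "\<lambda>j. sum_list (ws ! j)"] that
      decompositions_weights[OF assms] by simp
  then have "\<forall>w\<in>set ws. \<exists>x. w = unit_coord n x"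
    using nonzero len by (metis in_set_conv_nth unit_coord_if_sum_list_eq_1)
  then obtain xs where xs: "ws = map (unit_coord n) xs"
    by (auto simp flip: ex_map_conv)
  then have "set xs \<subseteq> {..<n}"
    using nonzero by (auto simp: unit_coord_eq_zero_iff not_le)
  moreover have "\<forall>l<n. count_list xs l = 1"
    using total by (simp add: xs list_eq_iff_nth_eq vsum_map_unit_coord)
  ultimately show thesis
    using that xs count_list_eq_1_iff_permutation by blast
qed

lemma map_unit_coord_mem_decompositions:
  assumes "xs \<in> permutations_of_set {..<n}"
  shows "map (unit_coord n) xs \<in> decompositions n n"
proof -
  have "set xs = {..<n}" "length xs = n"
    using assms permutations_of_setD distinct_card[of xs] by fastforce+
  moreover have "vsum n (map (unit_coord n) xs) = ones n"
    using assms count_list_eq_1_iff_permutation[of xs n] \<open>set xs = {..<n}\<close>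
    by (simp add: list_eq_iff_nth_eq vsum_map_unit_coord)
  ultimately show ?thesis
    by (auto simp: decompositions_def unit_coord_mem_bincoords unit_coord_eq_zero_iff)
qed

lemma decompositions_self: "decompositions n n = map (unit_coord n) ` permutations_of_set {..<n}"
  by (auto elim: decompositions_self_obtains_permutation intro: map_unit_coord_mem_decompositions)

lemma sum_decompositions_self:
  "(\<Sum>ws\<in>decompositions n n. \<Prod>w\<leftarrow>ws. tvar n w) = of_nat (fact n) * (\<Prod>i<n. tvar n (unit_coord n i))"
proof -
  have "inj_on (unit_coord n) {..<n}"
    by (rule inj_onI) (metis lessThan_iff nth_unit_coord zero_neq_one)
  then have inj: "inj_on (map (unit_coord n)) (permutations_of_set {..<n})"
    by (intro inj_on_mapI) simp
  have "(\<Sum>ws\<in>decompositions n n. \<Prod>w\<leftarrow>ws. tvar n w) =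
      (\<Sum>xs\<in>permutations_of_set {..<n}. \<Prod>x\<leftarrow>xs. tvar n (unit_coord n x))"
    unfolding decompositions_self by (simp add: sum.reindex[OF inj] comp_def)
  also have "\<dots> = (\<Sum>xs\<in>permutations_of_set {..<n}. \<Prod>i<n. tvar n (unit_coord n i))"
    by (intro sum.cong refl)
      (metis permutations_of_setD prod.distinct_set_conv_list[of _ "\<lambda>i. tvar n (unit_coord n i)"])
  finally show ?thesis
    by simp
qed

theorem proposition4p9:
  fixes n :: nat
  assumes "n \<ge> 1"
  shows
  "(\<forall>v\<in>bincoords n. \<forall>w\<in>bincoords n. \<forall>x y. \<forall>i<n.
       v ! i = 0 \<and> w ! i = 0 \<longrightarrow> sim1 n (entry n v x * entry n w y) 0)
   \<and> (\<forall>v\<in>bincoords n. \<forall>x. v \<noteq> ones n \<longrightarrow> sim1 n (entry n v x) 0)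
   \<and> (\<forall>v\<in>bincoords n. \<forall>w\<in>bincoords n. \<forall>x y.
       sim1 n (entry n v x * entry n w y)
         (\<Sum>(v', w')\<in>{(v', w'). v' \<in> bincoords n \<and> w' \<in> bincoords n \<and>
                        list_all2 (\<le>) v' v \<and> list_all2 (\<le>) w' w \<and> map2 (+) v' w' = ones n}.
            entry n v' x * entry n w' y))
   \<and> (\<forall>k\<ge>1. sim1 n (entry n (ones n) ([:0, 1:] ^ k))
         (\<Sum>ws\<in>{ws. length ws = k \<and> (\<forall>w\<in>set ws. w \<in> bincoords n \<and> w \<noteq> replicate n 0)
                   \<and> vsum n ws = ones n}.
            \<Prod>w\<leftarrow>ws. entry n w [:0, 1:]))
   \<and> sim1 n (entry n (ones n) ([:0, 1:] ^ n))
         (of_nat (fact n) * (\<Prod>i<n. entry n (unit_coord n i) [:0, 1:]))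
   \<and> (\<forall>k>n. sim1 n (entry n (ones n) ([:0, 1:] ^ k)) 0)"
proof -
  have powers: "sim1 n (entry n (ones n) ([:0, 1:] ^ k))
      (\<Sum>ws\<in>decompositions n k. \<Prod>w\<leftarrow>ws. entry n w [:0, 1:])" for k
    using t_power_sim1_sum_decompositions[OF assms] by (simp add: entry_t)
  have "sim1 n (entry n (ones n) ([:0, 1:] ^ n))
      (of_nat (fact n) * (\<Prod>i<n. entry n (unit_coord n i) [:0, 1:]))"
    using powers[of n] by (simp add: entry_t sum_decompositions_self)
  moreover have "sim1 n (entry n (ones n) ([:0, 1:] ^ k)) 0" if "n < k" for k
    using powers[of k] by (simp add: decompositions_eq_empty[OF that])
  ultimately show ?thesis
    using entry_mult_sim1_0_if_common_zero entry_sim1_0_if_not_ones entry_mult_sim1_sum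
      powers[unfolded decompositions_def]
    by blast
qed

end
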